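(* For every instance of 2NC-TAP and every run of the greedy algorithm (with arbitrary tie-breaking), the dual vector $y$ defined from that run satisfies $y_{\mathcal P}\ge 0$ for every $u\in N(T)$ and every $\mathcal P\in\Pi_u$. Equivalently, for each $u\in N(T)$ and each $j\in\{2,\dots,\nu(u)-1\}$, $\mathrm{wgt}(\mathcal P^{(j)}_u)\ge \mathrm{wgt}(\mathcal P^{(j-1)}_u)$.
   Context: An instance of 2NC-TAP consists of a simple undirected 2-node connected graph $G=(V,E)$ with $|V|\ge 3$, a spanning tree $T\subseteq E$ of $G$ (whose edges have cost $0$), and nonnegative costs $\mathrm{cost}(\ell)$ on the links, i.e. the edges of $L(G):=E\setminus T$. Let $N(T)$ be the set of non-leaf nodes of $T$. For $u\in N(T)$, let $\pi_u$ be the partition of $V\setminus\{u\}$ into the vertex sets of the connected components of $T-u$, let $\nu(u)=|\pi_u|$, and let $\Pi_u$ be the set of partitions $\mathcal P$ of $V\setminus\{u\}$ such that every set of $\pi_u$ is contained in a set of $\mathcal P$ (partitions associated with different $u$ are regarded as distinct objects). A link $\ell$ crosses $\mathcal P\in\Pi_u$ if neither end node of $\ell$ is $u$ and its end nodes lie in different sets of $\mathcal P$. Greedy algorithm: start with $F^1=\emptyset$. At the start of iteration $i=1,2,\dots$, for each $u\in N(T)$ let the current partition $\mathcal P^i_u\in\Pi_u$ be the partition of $V\setminus\{u\}$ into the vertex sets of the connected components of $(V,T\cup F^i)-u$. For each link $\ell$ let $\mathrm{inc}^i(\ell)=\{\mathcal P^i_u: u\in N(T),\ \ell \text{ crosses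 } \mathcal P^i_u\}$. If $(V,T\cup F^i)$ is 2-node connected, stop and output $\hat F=F^i$. Otherwise pick a link $\ell_i$ with $\mathrm{inc}^i(\ell_i)\neq\emptyset$ minimizing $\mathrm{cost}(\ell_i)/|\mathrm{inc}^i(\ell_i)|$ (ties broken arbitrarily), set $\mathrm{wgt}(\mathcal P^i_u)=\mathrm{cost}(\ell_i)/|\mathrm{inc}^i(\ell_i)|$ for every $\mathcal P^i_u\in\mathrm{inc}^i(\ell_i)$, and set $F^{i+1}=F^i\cup\{\ell_i\}$. (All other partitions have weight $0$.) For $u\in N(T)$, let $\mathcal P^{(1)}_u,\dots,\mathcal P^{(\nu(u)-1)}_u$ be the partitions in $\Pi_u$ that are crossed by the link picked in some iteration at the time they are current (i.e. $\mathcal P^i_u\in\mathrm{inc}^i(\ell_i)$), listed in the order of the iterations in which this happens. The dual vector $y$ is: $y_{\mathcal P^{(1)}_u}=\mathrm{wgt}(\mathcal P^{(1)}_u)$, $y_{\mathcal P^{(j)}_u}=\mathrm{wgt}(\mathcal P^{(j)}_u)-\mathrm{wgt}(\mathcal P^{(j-1)}_u)$ for $j=2,\dots,\nu(u)-1$, and $y_{\mathcal P}=0$ for all other $\mathcal P\in\Pi_u$. *)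

theory Defs
  imports Complex_Main "HOL-Library.Disjoint_Sets"
begin

definition adj_rel :: "'a set \<Rightarrow> 'a set set \<Rightarrow> ('a \<times> 'a) set" where
  "adj_rel W Es = {(x, y). x \<in> W \<and> y \<in> W \<and> {x, y} \<in> Es}"

definition connected_on :: "'a set \<Rightarrow> 'a set set \<Rightarrow> bool" where
  "connected_on W Es = (\<forall>x\<in>W. \<forall>y\<in>W. (x, y) \<in> (adj_rel W Es)\<^sup>*)"

definition components :: "'a set \<Rightarrow> 'a set set \<Rightarrow> 'a set set" where
  "components W Es = {{y \<in> W. (x, y) \<in> (adj_rel W Es)\<^sup>*} | x. x \<in> W}"

definition simple_graph :: "'a set \<Rightarrow> 'a set set \<Rightarrow> bool" where
  "simple_graph V E = (finite V \<and> (\<forall>e\<in>E. e \<subseteq> V \<and> card e = 2))"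

definition two_node_connected :: "'a set \<Rightarrow> 'a set set \<Rightarrow> bool" where
  "two_node_connected V Es =
     (card V \<ge> 3 \<and> connected_on V Es \<and> (\<forall>v\<in>V. connected_on (V - {v}) Es))"

definition spanning_tree :: "'a set \<Rightarrow> 'a set set \<Rightarrow> 'a set set \<Rightarrow> bool" where
  "spanning_tree V E T =
     (T \<subseteq> E \<and> connected_on V T \<and> (\<forall>e\<in>T. \<not> connected_on V (T - {e})))"

definition links :: "'a set set \<Rightarrow> 'a set set \<Rightarrow> 'a set set" where
  "links E T = E - T"

definition tdegree :: "'a set set \<Rightarrow> 'a \<Rightarrow> nat" where
  "tdegree T v = card {e \<in> T. v \<in> e}"

definition nonleaf :: "'a set \<Rightarrow> 'a set set \<Rightarrow> 'a set" where
  "nonleaf V T = {u \<in> V. tdegree T u \<ge> 2}"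

definition pi_part :: "'a set \<Rightarrow> 'a set set \<Rightarrow> 'a \<Rightarrow> 'a set set" where
  "pi_part V T u = components (V - {u}) T"

definition Pi_parts :: "'a set \<Rightarrow> 'a set set \<Rightarrow> 'a \<Rightarrow> 'a set set set" where
  "Pi_parts V T u =
     {P. partition_on (V - {u}) P \<and> (\<forall>B\<in>pi_part V T u. \<exists>C\<in>P. B \<subseteq> C)}"

definition cur_part :: "'a set \<Rightarrow> 'a set set \<Rightarrow> 'a set set \<Rightarrow> 'a \<Rightarrow> 'a set set" where
  "cur_part V T F u = components (V - {u}) (T \<union> F)"

definition crosses :: "'a set \<Rightarrow> 'a \<Rightarrow> 'a set set \<Rightarrow> bool" where
  "crosses l u P =
     (u \<notin> l \<and> (\<exists>x\<in>l. \<exists>y\<in>l. \<exists>A\<in>P. \<exists>B\<in>P. x \<in> A \<and> y \<in> B \<and> A \<noteq> B))"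

text \<open>inc(l); a partition in Pi_u is represented as the pair (u, P), so that
  partitions associated with different u are distinct.\<close>
definition inc :: "'a set \<Rightarrow> 'a set set \<Rightarrow> 'a set set \<Rightarrow> 'a set \<Rightarrow> ('a \<times> 'a set set) set" where
  "inc V T F l =
     {(u, cur_part V T F u) | u. u \<in> nonleaf V T \<and> crosses l u (cur_part V T F u)}"

text \<open>A run is the list ls of picked links l_1, ..., l_k; F^(i+1) = first i links
  (0-based index i corresponds to iteration i+1).\<close>
definition runF :: "'a set list \<Rightarrow> nat \<Rightarrow> 'a set set" where
  "runF ls i = set (take i ls)"

definition ratio :: "'a set \<Rightarrow> 'a set set \<Rightarrow> ('a set \<Rightarrow> real) \<Rightarrow> 'a set set \<Rightarrow> 'a set \<Rightarrow> real" where
  "ratio V T cost F l = cost l / real (card (inc V T F l))"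

definition greedy_run ::
  "'a set \<Rightarrow> 'a set set \<Rightarrow> 'a set set \<Rightarrow> ('a set \<Rightarrow> real) \<Rightarrow> 'a set list \<Rightarrow> bool" where
  "greedy_run V E T cost ls =
     ((\<forall>i < length ls.
         \<not> two_node_connected V (T \<union> runF ls i)
       \<and> ls ! i \<in> links E T
       \<and> inc V T (runF ls i) (ls ! i) \<noteq> {}
       \<and> (\<forall>l \<in> links E T. inc V T (runF ls i) l \<noteq> {} \<longrightarrow>
             ratio V T cost (runF ls i) (ls ! i) \<le> ratio V T cost (runF ls i) l))
      \<and> two_node_connected V (T \<union> runF ls (length ls)))"

definition wgt ::
  "'a set \<Rightarrow> 'a set set \<Rightarrow> ('a set \<Rightarrow> real) \<Rightarrow> 'a set list \<Rightarrow> 'a \<Rightarrow> 'a set set \<Rightarrow> real" where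
  "wgt V T cost ls u P =
     (if \<exists>i < length ls. (u, P) \<in> inc V T (runF ls i) (ls ! i)
      then (let i = (SOME i. i < length ls \<and> (u, P) \<in> inc V T (runF ls i) (ls ! i))
            in ratio V T cost (runF ls i) (ls ! i))
      else 0)"

definition cross_iters :: "'a set \<Rightarrow> 'a set set \<Rightarrow> 'a set list \<Rightarrow> 'a \<Rightarrow> nat list" where
  "cross_iters V T ls u =
     filter (\<lambda>i. (u, cur_part V T (runF ls i) u) \<in> inc V T (runF ls i) (ls ! i)) [0..<length ls]"

text \<open>P^(j)_u (0-based j here).\<close>
definition crossed_part :: "'a set \<Rightarrow> 'a set set \<Rightarrow> 'a set list \<Rightarrow> 'a \<Rightarrow> nat \<Rightarrow> 'a set set" where
  "crossed_part V T ls u j = cur_part V T (runF ls (cross_iters V T ls u ! j)) u"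

definition dual_y ::
  "'a set \<Rightarrow> 'a set set \<Rightarrow> ('a set \<Rightarrow> real) \<Rightarrow> 'a set list \<Rightarrow> 'a \<Rightarrow> 'a set set \<Rightarrow> real" where
  "dual_y V T cost ls u P =
     (if \<exists>j < length (cross_iters V T ls u). crossed_part V T ls u j = P
      then (let j = (LEAST j. j < length (cross_iters V T ls u) \<and> crossed_part V T ls u j = P)
            in if j = 0 then wgt V T cost ls u (crossed_part V T ls u 0)
               else wgt V T cost ls u (crossed_part V T ls u j)
                    - wgt V T cost ls u (crossed_part V T ls u (j - 1)))
      else 0)"

end

theory Submission
  imports Defs
begin

text \<open>Adding links only merges components, so a fixed link crosses fewer current
  partitions as the run proceeds and, costs being nonnegative, its ratio can only grow.
  Since the greedy choice at an earlier iteration was at most the ratio the later link had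
  then, the ratios of the picked links are nondecreasing along the run. A partition crossed
  by the picked link is never current again for the same node, so its weight is the ratio
  of a single iteration; hence the weights of the successively crossed partitions of a node
  are nondecreasing, and their differences, the entries of the dual vector, are nonnegative.\<close>

lemma adj_rel_rtrancl_sym:
  assumes "(x, y) \<in> (adj_rel W Es)\<^sup>*"
  shows "(y, x) \<in> (adj_rel W Es)\<^sup>*"
  using assms
proof (induction rule: rtrancl_induct)
  case base
  then show ?case by simp
next
  case (step y z)
  then have "(z, y) \<in> adj_rel W Es" by (auto simp: adj_rel_def insert_commute)
  then show ?case using step.IH by (rule converse_rtrancl_into_rtrancl)
qed

lemma adj_rel_rtrancl_mono: "Es \<subseteq> Es' \<Longrightarrow> (adj_rel W Es)\<^sup>* \<subseteq> (adj_rel W Es')\<^sup>*"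
  by (rule rtrancl_mono) (auto simp: adj_rel_def)

lemma reachable_set_in_components:
  "x \<in> W \<Longrightarrow> {y \<in> W. (x, y) \<in> (adj_rel W Es)\<^sup>*} \<in> components W Es"
  by (auto simp: components_def)

lemma components_eq_reachable_set:
  assumes "C \<in> components W Es" "z \<in> C"
  shows "C = {y \<in> W. (z, y) \<in> (adj_rel W Es)\<^sup>*}"
proof -
  obtain x where x: "x \<in> W" "C = {y \<in> W. (x, y) \<in> (adj_rel W Es)\<^sup>*}"
    using assms(1) by (auto simp: components_def)
  then have xz: "(x, z) \<in> (adj_rel W Es)\<^sup>*" using assms(2) by auto
  show ?thesis
    unfolding x(2) using xz adj_rel_rtrancl_sym[OF xz] by (auto intro: rtrancl_trans)
qed

lemma crosses_components_iff:
  "crosses l u (components W Es) \<longleftrightarrow>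
    u \<notin> l \<and> (\<exists>x\<in>l. \<exists>y\<in>l. x \<in> W \<and> y \<in> W \<and> (x, y) \<notin> (adj_rel W Es)\<^sup>*)"
proof
  assume "crosses l u (components W Es)"
  then obtain x y A B where h: "u \<notin> l" "x \<in> l" "y \<in> l" "A \<in> components W Es"
    "B \<in> components W Es" "x \<in> A" "y \<in> B" "A \<noteq> B"
    unfolding crosses_def by blast
  have A: "A = {z \<in> W. (x, z) \<in> (adj_rel W Es)\<^sup>*}"
    using components_eq_reachable_set[OF h(4) h(6)] .
  have B: "B = {z \<in> W. (y, z) \<in> (adj_rel W Es)\<^sup>*}"
    using components_eq_reachable_set[OF h(5) h(7)] .
  have "(x, y) \<notin> (adj_rel W Es)\<^sup>*"
  proof
    assume "(x, y) \<in> (adj_rel W Es)\<^sup>*"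
    then have "y \<in> A" using A B h(7) by auto
    then show False using components_eq_reachable_set[OF h(4)] B h(8) by blast
  qed
  then show "u \<notin> l \<and> (\<exists>x\<in>l. \<exists>y\<in>l. x \<in> W \<and> y \<in> W \<and> (x, y) \<notin> (adj_rel W Es)\<^sup>*)"
    using h A B by blast
next
  assume "u \<notin> l \<and> (\<exists>x\<in>l. \<exists>y\<in>l. x \<in> W \<and> y \<in> W \<and> (x, y) \<notin> (adj_rel W Es)\<^sup>*)"
  then obtain x y where h: "u \<notin> l" "x \<in> l" "y \<in> l" "x \<in> W" "y \<in> W"
    "(x, y) \<notin> (adj_rel W Es)\<^sup>*" by blast
  let ?A = "{z \<in> W. (x, z) \<in> (adj_rel W Es)\<^sup>*}"
  let ?B = "{z \<in> W. (y, z) \<in> (adj_rel W Es)\<^sup>*}"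
  have comps: "?A \<in> components W Es" "?B \<in> components W Es"
    using h(4,5) by (auto intro: reachable_set_in_components)
  have mem: "x \<in> ?A" "y \<in> ?B" "y \<notin> ?A" using h(4-6) by auto
  then have "?A \<noteq> ?B" by blast
  then show "crosses l u (components W Es)"
    unfolding crosses_def using h(1) mem(1,2)
    by (intro conjI bexI[OF _ h(2)] bexI[OF _ h(3)] bexI[OF _ comps(1)] bexI[OF _ comps(2)]) auto
qed

lemma crosses_components_antimono:
  "Es \<subseteq> Es' \<Longrightarrow> crosses l u (components W Es') \<Longrightarrow> crosses l u (components W Es)"
  using adj_rel_rtrancl_mono[of Es Es' W] unfolding crosses_components_iff by blast

lemma components_eq_imp_reachable:
  assumes "components W Es = components W Es'" "x \<in> W"
    and "(x, y) \<in> (adj_rel W Es')\<^sup>*"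
  shows "(x, y) \<in> (adj_rel W Es)\<^sup>*"
proof -
  have "{z \<in> W. (x, z) \<in> (adj_rel W Es)\<^sup>*} \<in> components W Es'"
    using reachable_set_in_components[OF assms(2), of Es] assms(1) by simp
  then have "{z \<in> W. (x, z) \<in> (adj_rel W Es)\<^sup>*} = {z \<in> W. (x, z) \<in> (adj_rel W Es')\<^sup>*}"
    using assms(2) by (intro components_eq_reachable_set) auto
  moreover have "y \<in> W"
    using assms(2,3) by (cases "x = y") (auto dest: rtranclD tranclD2 simp: adj_rel_def)
  ultimately show ?thesis using assms(3) by blast
qed

lemma components_change_by_crossing_edge:
  assumes "card l = 2" "crosses l u (components W Es)" "l \<in> Es'"
  shows "components W Es' \<noteq> components W Es"
proof
  assume eq: "components W Es' = components W Es"
  obtain x y where h: "x \<in> l" "y \<in> l" "x \<in> W" "y \<in> W" "(x, y) \<notin> (adj_rel W Es)\<^sup>*"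
    using assms(2) unfolding crosses_components_iff by blast
  have "x \<noteq> y" using h(5) by auto
  with assms(1) h(1,2) have "l = {x, y}" by (auto simp: card_2_iff)
  then have "(x, y) \<in> (adj_rel W Es')\<^sup>*" using h(3,4) assms(3) by (auto simp: adj_rel_def)
  then show False using components_eq_imp_reachable[OF eq[symmetric] h(3)] h(5) by blast
qed

lemma mem_inc_iff:
  "(u, P) \<in> inc V T F l \<longleftrightarrow>
    u \<in> nonleaf V T \<and> crosses l u (cur_part V T F u) \<and> P = cur_part V T F u"
  by (auto simp: inc_def)

lemma card_inc:
  "card (inc V T F l) = card {u \<in> nonleaf V T. crosses l u (cur_part V T F u)}"
proof -
  have "inc V T F l =
      (\<lambda>u. (u, cur_part V T F u)) ` {u \<in> nonleaf V T. crosses l u (cur_part V T F u)}"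
    by (auto simp: inc_def)
  then show ?thesis by (simp add: card_image inj_on_def)
qed

lemma runF_mono: "a \<le> b \<Longrightarrow> runF ls a \<subseteq> runF ls b"
  unfolding runF_def by (rule set_take_subset_set_take)

lemma nth_in_runF: "a < b \<Longrightarrow> b \<le> length ls \<Longrightarrow> ls ! a \<in> runF ls b"
  unfolding runF_def by (metis in_set_conv_nth length_take min.absorb2 nth_take)

lemma greedy_run_nth_link:
  "greedy_run V E T cost ls \<Longrightarrow> i < length ls \<Longrightarrow> ls ! i \<in> links E T"
  unfolding greedy_run_def by blast

lemma greedy_run_ratio_mono:
  assumes run: "greedy_run V E T cost ls" and "finite V"
    and cost_nonneg: "\<forall>l \<in> links E T. cost l \<ge> 0"
    and ab: "a < b" "b < length ls"
  shows "ratio V T cost (runF ls a) (ls ! a) \<le> ratio V T cost (runF ls b) (ls ! b)"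
proof -
  let ?l = "ls ! b"
  define Ua where "Ua = {u \<in> nonleaf V T. crosses ?l u (cur_part V T (runF ls a) u)}"
  define Ub where "Ub = {u \<in> nonleaf V T. crosses ?l u (cur_part V T (runF ls b) u)}"
  have l: "?l \<in> links E T" "inc V T (runF ls b) ?l \<noteq> {}"
    using run ab unfolding greedy_run_def by auto
  have greedy_at_a: "\<forall>l \<in> links E T. inc V T (runF ls a) l \<noteq> {} \<longrightarrow>
      ratio V T cost (runF ls a) (ls ! a) \<le> ratio V T cost (runF ls a) l"
    using run ab unfolding greedy_run_def by auto
  have "T \<union> runF ls a \<subseteq> T \<union> runF ls b" using runF_mono[of a b ls] ab by auto
  then have "Ub \<subseteq> Ua"
    unfolding Ua_def Ub_def cur_part_def by (auto intro: crosses_components_antimono)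
  moreover have "finite Ua" using \<open>finite V\<close> unfolding Ua_def nonleaf_def by auto
  moreover have "Ub \<noteq> {}" using l(2) unfolding Ub_def inc_def by blast
  ultimately have card_U: "0 < card Ub" "card Ub \<le> card Ua"
    by (auto intro: card_mono simp: card_gt_0_iff finite_subset)
  then have "card (inc V T (runF ls a) ?l) > 0" unfolding card_inc Ua_def by linarith
  then have "inc V T (runF ls a) ?l \<noteq> {}" by force
  then have "ratio V T cost (runF ls a) (ls ! a) \<le> ratio V T cost (runF ls a) ?l"
    using greedy_at_a l(1) by blast
  also have "\<dots> = cost ?l / card Ua" unfolding ratio_def card_inc Ua_def ..
  also have "\<dots> \<le> cost ?l / card Ub"
    using card_U cost_nonneg l(1) by (intro divide_left_mono) auto
  also have "\<dots> = ratio V T cost (runF ls b) ?l" unfolding ratio_def card_inc Ub_def ..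
  finally show ?thesis .
qed

lemma greedy_run_crossed_part_unique:
  assumes run: "greedy_run V E T cost ls" and "simple_graph V E"
    and i: "i < length ls" "(u, cur_part V T (runF ls i) u) \<in> inc V T (runF ls i) (ls ! i)"
    and s: "s < length ls" "(u, cur_part V T (runF ls i) u) \<in> inc V T (runF ls s) (ls ! s)"
  shows "s = i"
proof -
  have changes: "cur_part V T (runF ls b) u \<noteq> cur_part V T (runF ls a) u"
    if "a < b" "b < length ls" "(u, cur_part V T (runF ls a) u) \<in> inc V T (runF ls a) (ls ! a)"
    for a b
  proof -
    have "card (ls ! a) = 2"
      using \<open>simple_graph V E\<close> greedy_run_nth_link[OF run] that(1,2)
      by (auto simp: simple_graph_def links_def)
    moreover have "ls ! a \<in> T \<union> runF ls b" using nth_in_runF[of a b ls] that(1,2) by simp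
    ultimately show ?thesis
      using that(3) unfolding mem_inc_iff cur_part_def
      by (blast dest: components_change_by_crossing_edge)
  qed
  have "cur_part V T (runF ls i) u = cur_part V T (runF ls s) u"
    using s(2) unfolding mem_inc_iff by auto
  with s(2) show "s = i"
    using changes[of s i] changes[of i s] i s(1) by (metis linorder_neqE_nat)
qed

lemma greedy_run_wgt_eq_ratio:
  assumes run: "greedy_run V E T cost ls" and "simple_graph V E"
    and i: "i < length ls" "(u, cur_part V T (runF ls i) u) \<in> inc V T (runF ls i) (ls ! i)"
  shows "wgt V T cost ls u (cur_part V T (runF ls i) u) = ratio V T cost (runF ls i) (ls ! i)"
proof -
  let ?P = "cur_part V T (runF ls i) u"
  have ex: "\<exists>s < length ls. (u, ?P) \<in> inc V T (runF ls s) (ls ! s)" using i by blast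
  have "(SOME s. s < length ls \<and> (u, ?P) \<in> inc V T (runF ls s) (ls ! s)) = i"
    using someI_ex[OF ex] greedy_run_crossed_part_unique[OF assms] by blast
  then show ?thesis unfolding wgt_def using ex by (simp add: Let_def)
qed

lemma cross_iters_nth:
  assumes "k < length (cross_iters V T ls u)"
  defines "i \<equiv> cross_iters V T ls u ! k"
  shows "i < length ls" "(u, cur_part V T (runF ls i) u) \<in> inc V T (runF ls i) (ls ! i)"
  using nth_mem[OF assms(1)] unfolding i_def cross_iters_def by auto

lemma wgt_crossed_part:
  assumes "greedy_run V E T cost ls" "simple_graph V E" "k < length (cross_iters V T ls u)"
  shows "wgt V T cost ls u (crossed_part V T ls u k) =
    ratio V T cost (runF ls (cross_iters V T ls u ! k)) (ls ! (cross_iters V T ls u ! k))"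
  unfolding crossed_part_def
  using greedy_run_wgt_eq_ratio[OF assms(1,2) cross_iters_nth[OF assms(3)]] .

lemma wgt_crossed_part_nonneg:
  assumes "greedy_run V E T cost ls" "simple_graph V E" "\<forall>l \<in> links E T. cost l \<ge> 0"
    and "k < length (cross_iters V T ls u)"
  shows "wgt V T cost ls u (crossed_part V T ls u k) \<ge> 0"
  using wgt_crossed_part[OF assms(1,2,4)] assms(3)
    greedy_run_nth_link[OF assms(1) cross_iters_nth(1)[OF assms(4)]]
  by (simp add: ratio_def)

lemma wgt_crossed_part_mono:
  assumes run: "greedy_run V E T cost ls" and "simple_graph V E"
    and "\<forall>l \<in> links E T. cost l \<ge> 0"
    and jk: "j < k" "k < length (cross_iters V T ls u)"
  shows "wgt V T cost ls u (crossed_part V T ls u j) \<le> wgt V T cost ls u (crossed_part V T ls u k)"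
proof -
  have "sorted_wrt (<) (cross_iters V T ls u)"
    unfolding cross_iters_def by (simp add: sorted_wrt_filter sorted_wrt_upt)
  then have "cross_iters V T ls u ! j < cross_iters V T ls u ! k"
    using jk by (simp add: sorted_wrt_nth_less)
  moreover have "finite V" using \<open>simple_graph V E\<close> by (simp add: simple_graph_def)
  ultimately show ?thesis
    using greedy_run_ratio_mono[OF run] cross_iters_nth(1)[OF jk(2)] assms jk
    by (simp add: wgt_crossed_part)
qed

theorem mainTheorem3:
  fixes V :: "'a set" and E T :: "'a set set" and cost :: "'a set \<Rightarrow> real"
    and ls :: "'a set list"
  assumes "simple_graph V E"
    and "card V \<ge> 3"
    and "two_node_connected V E"
    and "spanning_tree V E T"
    and "\<forall>l \<in> links E T. cost l \<ge> 0"
    and "greedy_run V E T cost ls"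
  shows "\<forall>u \<in> nonleaf V T. \<forall>P \<in> Pi_parts V T u. dual_y V T cost ls u P \<ge> 0"
proof (intro ballI)
  fix u P
  let ?n = "length (cross_iters V T ls u)"
  let ?w = "\<lambda>j. wgt V T cost ls u (crossed_part V T ls u j)"
  show "dual_y V T cost ls u P \<ge> 0"
  proof (cases "\<exists>j < ?n. crossed_part V T ls u j = P")
    case True
    define j where "j = (LEAST j. j < ?n \<and> crossed_part V T ls u j = P)"
    have "j < ?n" using LeastI_ex[OF True] unfolding j_def by blast
    then have "j = 0 \<Longrightarrow> ?w 0 \<ge> 0" "j \<noteq> 0 \<Longrightarrow> ?w (j - 1) \<le> ?w j"
      using wgt_crossed_part_nonneg[OF assms(6,1,5)] wgt_crossed_part_mono[OF assms(6,1,5)]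
      by auto
    then show ?thesis using True unfolding dual_y_def j_def[symmetric] Let_def by auto
  qed (auto simp: dual_y_def)
qed

end
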